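(* Let $\mathcal{X}$ be a metrizable manifold with boundary, let $\phi:\mathcal{X}\to\mathbb{R}^m$ be continuous, and let $\mathcal{F}\subseteq C(\mathbb{R}^m,\mathbb{R}^n)$ be dense for the topology of uniform convergence on compacts. Then the set $\{f\circ\phi: f\in\mathcal{F}\}$ is dense in $C(\mathcal{X},\mathbb{R}^n)$ (for the topology of uniform convergence on compacts) if and only if $\phi$ is injective.
   Context: A metrizable manifold with boundary is a metrizable topological space in which every point has an open neighbourhood homeomorphic to $\{z\in\mathbb{R}^k: \|z\|<1,\ z_k\ge 0\}$ for some $k$. $C(\mathcal{X},\mathbb{R}^n)$ denotes the continuous maps $\mathcal{X}\to\mathbb{R}^n$. *)

theory Defs
  imports "HOL-Analysis.Analysis"
begin

text \<open>The closed-at-the-bottom unit half-ball in R^k, embedded in nat => real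
  (coordinates 0..k-1; all others zero). On this subset the product topology of
  nat => real coincides with the Euclidean topology of R^k. For k = 0 it is the
  one-point space R^0.\<close>
definition half_ball :: "nat \<Rightarrow> (nat \<Rightarrow> real) set" where
  "half_ball k = {z. (\<forall>i\<ge>k. z i = 0) \<and> (\<Sum>i<k. (z i)\<^sup>2) < 1 \<and> (0 < k \<longrightarrow> 0 \<le> z (k - 1))}"

definition metrizable_manifold_with_boundary :: "'a topology \<Rightarrow> bool" where
  "metrizable_manifold_with_boundary X \<longleftrightarrow>
     metrizable_space X \<and>
     (\<forall>x\<in>topspace X. \<exists>U k. openin X U \<and> x \<in> U \<and>
         subtopology X U homeomorphic_space subtopology euclidean (half_ball k))"

definition dense_ucc :: "'a topology \<Rightarrow> ('a \<Rightarrow> 'b::metric_space) set \<Rightarrow> bool" where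
  "dense_ucc Y G \<longleftrightarrow>
     (\<forall>g. continuous_map Y euclidean g \<longrightarrow>
        (\<forall>K e. compactin Y K \<and> 0 < e \<longrightarrow> (\<exists>h\<in>G. \<forall>x\<in>K. dist (h x) (g x) < e)))"

end

theory Submission
  imports Defs
begin

text \<open>If \<phi> x = \<phi> y with x \<noteq> y, no f \<circ> \<phi> can approximate an Urysohn function separating x from y
  on the compact set {x, y}. Conversely, if \<phi> is injective it restricts to a homeomorphism of each
  compact K onto \<phi> ` K, so a continuous g on X equals G \<circ> \<phi> on K for a Dugundji extension G of
  g \<circ> (\<phi> restricted to K)\<inverse>; approximating G on the compact set \<phi> ` K by a member of F
  approximates g on K.\<close>

lemma dense_ucc_separates_points:
  fixes G :: "('a \<Rightarrow> 'b::euclidean_space) set"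
  assumes "completely_regular_space X" "t1_space X" "dense_ucc X G"
    and x: "x \<in> topspace X" and y: "y \<in> topspace X" and "x \<noteq> y"
  obtains h where "h \<in> G" "h x \<noteq> h y"
proof -
  obtain f :: "'a \<Rightarrow> real" where f: "continuous_map X (top_of_set {0..1}) f"
    and "f x = 0" "f y = 1"
    using assms closedin_t1_singleton[of X y] unfolding completely_regular_space_def by force
  obtain b :: 'b where b: "b \<in> Basis"
    using nonempty_Basis by blast
  define g where "g = (\<lambda>z. f z *\<^sub>R b)"
  have "continuous_map X euclidean ((\<lambda>t. t *\<^sub>R b) \<circ> f)"
    by (rule continuous_map_compose[OF continuous_map_into_fulltopology[OF f]])
      (simp add: continuous_on_scaleR)
  then have "continuous_map X euclidean g"
    by (simp add: g_def o_def)
  moreover have "compactin X {x, y}"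
    using x y by (simp add: finite_imp_compactin_eq)
  ultimately obtain h where "h \<in> G" and h: "\<forall>z\<in>{x, y}. dist (h z) (g z) < 1/2"
    using \<open>dense_ucc X G\<close> unfolding dense_ucc_def by (metis half_gt_zero zero_less_one)
  moreover have "h x \<noteq> h y"
  proof
    assume "h x = h y"
    then have "dist (g x) (g y) < 1"
      using h dist_triangle3[of "g x" "g y" "h y"] by (simp add: dist_commute)
    moreover have "dist (g x) (g y) = 1"
      using \<open>f x = 0\<close> \<open>f y = 1\<close> b by (simp add: g_def dist_norm)
    ultimately show False
      by simp
  qed
  ultimately show thesis
    using that by blast
qed

lemma inj_on_if_dense_ucc_compose:
  fixes \<phi> :: "'a \<Rightarrow> 'c" and F :: "('c \<Rightarrow> 'b::euclidean_space) set"
  assumes "completely_regular_space X" "t1_space X" "dense_ucc X ((\<lambda>f. f \<circ> \<phi>) ` F)"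
  shows "inj_on \<phi> (topspace X)"
proof (rule inj_onI, rule ccontr)
  fix x y
  assume "x \<in> topspace X" "y \<in> topspace X" "\<phi> x = \<phi> y" "x \<noteq> y"
  then obtain h where "h \<in> (\<lambda>f. f \<circ> \<phi>) ` F" "h x \<noteq> h y"
    using dense_ucc_separates_points assms by metis
  with \<open>\<phi> x = \<phi> y\<close> show False
    by auto
qed

lemma continuous_map_factors_through_inj_on_compactin:
  fixes \<phi> :: "'a \<Rightarrow> 'c::{metric_space,second_countable_topology}"
    and g :: "'a \<Rightarrow> 'b::real_inner"
  assumes \<phi>: "continuous_map X euclidean \<phi>" and "inj_on \<phi> K" and K: "compactin X K"
    and g: "continuous_map X euclidean g"
  obtains G where "continuous_on UNIV G" "\<And>x. x \<in> K \<Longrightarrow> G (\<phi> x) = g x"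
proof -
  have KX: "K \<subseteq> topspace X"
    using K compactin_subset_topspace by blast
  have "homeomorphic_map (subtopology X K) (top_of_set (\<phi> ` K)) \<phi>"
  proof (rule continuous_imp_homeomorphic_map)
    show "continuous_map (subtopology X K) (top_of_set (\<phi> ` K)) \<phi>"
      using \<phi> by (simp add: continuous_map_in_subtopology continuous_map_from_subtopology
          image_mono KX inf.absorb2)
  qed (use K KX \<open>inj_on \<phi> K\<close> in \<open>auto simp: compact_space_subtopology Hausdorff_space_subtopology
      inf.absorb2\<close>)
  then obtain \<psi> where "homeomorphic_maps (subtopology X K) (top_of_set (\<phi> ` K)) \<phi> \<psi>"
    using homeomorphic_map_maps by blast
  then have \<psi>: "continuous_map (top_of_set (\<phi> ` K)) (subtopology X K) \<psi>"
    and \<psi>_\<phi>: "\<And>x. x \<in> K \<Longrightarrow> \<psi> (\<phi> x) = x"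
    using KX unfolding homeomorphic_maps_def by (auto simp: inf.absorb2)
  have "continuous_on (\<phi> ` K) (g \<circ> \<psi>)"
    using continuous_map_compose[OF \<psi> continuous_map_from_subtopology[OF g]] by simp
  moreover have "closed (\<phi> ` K)"
    using image_compactin[OF K \<phi>] by (simp add: compact_imp_closed)
  ultimately obtain G where "continuous_on UNIV G" "\<And>y. y \<in> \<phi> ` K \<Longrightarrow> G y = (g \<circ> \<psi>) y"
    using Dugundji[of UNIV UNIV "\<phi> ` K" "g \<circ> \<psi>"] by auto
  with \<psi>_\<phi> show thesis
    using that by auto
qed

lemma dense_ucc_compose_if_inj_on:
  fixes \<phi> :: "'a \<Rightarrow> 'c::{metric_space,second_countable_topology}"
    and F :: "('c \<Rightarrow> 'b::real_inner) set"
  assumes \<phi>: "continuous_map X euclidean \<phi>" and inj: "inj_on \<phi> (topspace X)"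
    and F: "dense_ucc euclidean F"
  shows "dense_ucc X ((\<lambda>f. f \<circ> \<phi>) ` F)"
  unfolding dense_ucc_def
proof (intro allI impI, elim conjE)
  fix g :: "'a \<Rightarrow> 'b" and K and e :: real
  assume g: "continuous_map X euclidean g" and K: "compactin X K" and "0 < e"
  have "inj_on \<phi> K"
    using inj compactin_subset_topspace[OF K] by (rule inj_on_subset)
  then obtain G where "continuous_on UNIV G" and G: "\<And>x. x \<in> K \<Longrightarrow> G (\<phi> x) = g x"
    using continuous_map_factors_through_inj_on_compactin \<phi> K g by metis
  moreover have "compactin euclidean (\<phi> ` K)"
    using image_compactin[OF K \<phi>] .
  ultimately obtain f where "f \<in> F" and f: "\<forall>y\<in>\<phi> ` K. dist (f y) (G y) < e"
    using F \<open>0 < e\<close> unfolding dense_ucc_def by (metis continuous_map_iff_continuous2)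
  have "\<forall>x\<in>K. dist ((f \<circ> \<phi>) x) (g x) < e"
    using f G by auto
  with \<open>f \<in> F\<close> show "\<exists>h\<in>(\<lambda>f. f \<circ> \<phi>) ` F. \<forall>x\<in>K. dist (h x) (g x) < e"
    by blast
qed

theorem mainTheorem2:
  fixes X :: "'a topology"
    and \<phi> :: "'a \<Rightarrow> real ^ 'm"
    and F :: "(real ^ 'm \<Rightarrow> real ^ 'n) set"
  assumes "metrizable_manifold_with_boundary X"
    and "continuous_map X euclidean \<phi>"
    and "\<forall>f\<in>F. continuous_on UNIV f"
    and "dense_ucc euclidean F"
  shows "dense_ucc X ((\<lambda>f. f \<circ> \<phi>) ` F) \<longleftrightarrow> inj_on \<phi> (topspace X)"
proof -
  have "metrizable_space X"
    using assms(1) unfolding metrizable_manifold_with_boundary_def by blast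
  then have "completely_regular_space X" "t1_space X"
    by (simp_all add: metrizable_imp_completely_regular_space metrizable_imp_t1_space)
  then show ?thesis
    using inj_on_if_dense_ucc_compose dense_ucc_compose_if_inj_on assms(2,4) by blast
qed

end
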